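(* Let $\star$ be a semistar operation on an integral domain $D$ and $T$ an overring of $D$. Then $T$ is $t$-linked to $(D,\star)$ if and only if $T^{\ell_{\star,T}}=T$.
   Context: Let $D$ be an integral domain with quotient field $K$. $\overline{\mathbf F}(D)$ denotes the set of all nonzero $D$-submodules of $K$ and $\mathbf f(D)$ the set of nonzero finitely generated $D$-submodules of $K$. A semistar operation on $D$ is a map $\star:\overline{\mathbf F}(D)\to\overline{\mathbf F}(D)$, $E\mapsto E^\star$, such that for all $0\ne x\in K$ and $E,F\in\overline{\mathbf F}(D)$: (1) $(xE)^\star=xE^\star$; (2) $E\subseteq F\Rightarrow E^\star\subseteq F^\star$; (3) $E\subseteq E^\star$ and $(E^\star)^\star=E^\star$. $\star_f$ is defined by $E^{\star_f}=\bigcup\{F^\star:F\in\mathbf f(D),F\subseteq E\}$. A nonzero ideal $I$ of $D$ is a quasi-$\star$-ideal if $I^\star\cap D=I$; a quasi-$\star$-prime is a prime quasi-$\star$-ideal. An overring of $D$ is a ring $T$ with $D\subseteq T\subseteq K$; semistar operations on $T$ are defined likewise. For an overring $T$, $v_T$ is $E\mapsto (T:_K(T:_KE))$ and $t_T:=(v_T)_f$. If $\star'$ is a semistar operation on $T$, $T$ is $(\star,\star')$-linked to $D$ if for every nonzero finitely generated ideal $F\subseteq D$ with $F^\star=D^\star$ one has $(FT)^{\star'}=T^{\star'}$; $T$ is $t$-linked to $(D,\star)$ if it is $(\star,t_T)$-linked to $D$. The semistar operation $\ell_{\star,T}$ on $T$ is defined by $E^{\ell_{\star,T}}=\bigcap\{ET_{D\setminus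 P}: P$ a quasi-$\star_f$-prime ideal of $D\}$ for $E\in\overline{\mathbf F}(T)$ (equal to $K$ if there are none). *)

theory Defs
  imports Main
begin

text \<open>The quotient field K is modelled as a type 'a of class field; D, T are subsets.\<close>

definition is_subring :: "'a::field set \<Rightarrow> bool" where
  "is_subring R \<longleftrightarrow> 0 \<in> R \<and> 1 \<in> R \<and>
     (\<forall>x\<in>R. \<forall>y\<in>R. x + y \<in> R \<and> - x \<in> R \<and> x * y \<in> R)"

definition has_quotient_field :: "'a::field set \<Rightarrow> bool" where
  "has_quotient_field D \<longleftrightarrow> is_subring D \<and>
     (\<forall>x. \<exists>a\<in>D. \<exists>b\<in>D. b \<noteq> 0 \<and> x = a / b)"

definition is_submod :: "'a::field set \<Rightarrow> 'a set \<Rightarrow> bool" where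
  "is_submod R E \<longleftrightarrow> 0 \<in> E \<and> (\<forall>x\<in>E. \<forall>y\<in>E. x + y \<in> E) \<and> (\<forall>r\<in>R. \<forall>x\<in>E. r * x \<in> E)"

definition Fbar :: "'a::field set \<Rightarrow> 'a set set" where
  "Fbar R = {E. is_submod R E \<and> E \<noteq> {0}}"

definition fgen :: "'a::field set \<Rightarrow> 'a set \<Rightarrow> 'a set" where
  "fgen R S = {(\<Sum>s\<in>S. c s * s) | c. \<forall>s\<in>S. c s \<in> R}"

definition fsub :: "'a::field set \<Rightarrow> 'a set set" where
  "fsub R = {E. E \<in> Fbar R \<and> (\<exists>S. finite S \<and> E = fgen R S)}"

definition semistar :: "'a::field set \<Rightarrow> ('a set \<Rightarrow> 'a set) \<Rightarrow> bool" where
  "semistar R st \<longleftrightarrow>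
     (\<forall>E\<in>Fbar R. st E \<in> Fbar R) \<and>
     (\<forall>x E. x \<noteq> 0 \<longrightarrow> E \<in> Fbar R \<longrightarrow> st ((\<lambda>y. x * y) ` E) = (\<lambda>y. x * y) ` st E) \<and>
     (\<forall>E F. E \<in> Fbar R \<longrightarrow> F \<in> Fbar R \<longrightarrow> E \<subseteq> F \<longrightarrow> st E \<subseteq> st F) \<and>
     (\<forall>E\<in>Fbar R. E \<subseteq> st E \<and> st (st E) = st E)"

definition st_f :: "'a::field set \<Rightarrow> ('a set \<Rightarrow> 'a set) \<Rightarrow> 'a set \<Rightarrow> 'a set" where
  "st_f R st E = \<Union>{st F | F. F \<in> fsub R \<and> F \<subseteq> E}"

definition is_ideal :: "'a::field set \<Rightarrow> 'a set \<Rightarrow> bool" where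
  "is_ideal D I \<longleftrightarrow> is_submod D I \<and> I \<subseteq> D"

definition quasi_prime :: "'a::field set \<Rightarrow> ('a set \<Rightarrow> 'a set) \<Rightarrow> 'a set \<Rightarrow> bool" where
  "quasi_prime D st P \<longleftrightarrow> is_ideal D P \<and> P \<noteq> {0} \<and> P \<noteq> D \<and>
     (\<forall>a\<in>D. \<forall>b\<in>D. a * b \<in> P \<longrightarrow> a \<in> P \<or> b \<in> P) \<and> st P \<inter> D = P"

definition colon :: "'a::field set \<Rightarrow> 'a set \<Rightarrow> 'a set" where
  "colon A B = {x. \<forall>b\<in>B. x * b \<in> A}"

definition v_op :: "'a::field set \<Rightarrow> 'a set \<Rightarrow> 'a set" where
  "v_op T E = colon T (colon T E)"

definition t_op :: "'a::field set \<Rightarrow> 'a set \<Rightarrow> 'a set" where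
  "t_op T = st_f T (v_op T)"

definition modprod :: "'a::field set \<Rightarrow> 'a set \<Rightarrow> 'a set" where
  "modprod A B = {(\<Sum>i<n. a i * b i) | n (a :: nat \<Rightarrow> 'a) b. \<forall>i<n. a i \<in> A \<and> b i \<in> B}"

definition frac :: "'a::field set \<Rightarrow> 'a set \<Rightarrow> 'a set" where
  "frac T S = {t / s | t s. t \<in> T \<and> s \<in> S}"

definition t_linked :: "'a::field set \<Rightarrow> ('a set \<Rightarrow> 'a set) \<Rightarrow> 'a set \<Rightarrow> bool" where
  "t_linked D st T \<longleftrightarrow>
     (\<forall>F. F \<in> fsub D \<and> F \<subseteq> D \<and> st F = st D \<longrightarrow> t_op T (modprod F T) = t_op T T)"

text \<open>ell_{star,T}; the intersection over the empty family is UNIV = K\<close>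
definition ell :: "'a::field set \<Rightarrow> ('a set \<Rightarrow> 'a set) \<Rightarrow> 'a set \<Rightarrow> 'a set \<Rightarrow> 'a set" where
  "ell D st T E = \<Inter>{modprod E (frac T (D - P)) | P. quasi_prime D (st_f D st) P}"

end

theory Submission
  imports Defs
begin

text \<open>
  If \<open>T\<close> is \<open>t\<close>-linked and \<open>x \<in> T\<^sup>\<ell>\<close>, the conductor \<open>I = (T :\<^sub>D x)\<close> lies in no
  quasi-\<open>\<star>\<^sub>f\<close>-prime \<open>P\<close>: writing \<open>x\<close> as an element of \<open>T T\<^sub>D\<^sub>-\<^sub>P\<close> and clearing denominators
  gives some \<open>s \<in> I - P\<close>. A Zorn argument (an ideal maximal among those containing \<open>I\<close> with
  \<open>1 \<notin> Q\<^sup>\<star>\<^sup>f\<close> is quasi-\<open>\<star>\<^sub>f\<close>-prime) then gives \<open>1 \<in> I\<^sup>\<star>\<^sup>f\<close>, i.e. \<open>F\<^sup>\<star> = D\<^sup>\<star>\<close> for some finitely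
  generated \<open>F \<subseteq> I\<close>; \<open>t\<close>-linkedness yields \<open>1 \<in> (FT)\<^sup>t\<close>, and since \<open>xFT \<subseteq> T\<close> this forces \<open>x \<in> T\<close>.
  Conversely, if \<open>T\<^sup>\<ell> = T\<close> and \<open>F\<^sup>\<star> = D\<^sup>\<star>\<close> with \<open>F\<close> generated by \<open>S\<close>, no quasi-\<open>\<star>\<^sub>f\<close>-prime
  contains \<open>S\<close>, so every \<open>w\<close> with \<open>wS \<subseteq> T\<close> lies in each \<open>T\<^sub>D\<^sub>-\<^sub>P\<close>, hence in \<open>T\<^sup>\<ell> = T\<close>.
  Thus \<open>(T : ST) = T\<close>, whence \<open>(FT)\<^sup>t \<supseteq> (ST)\<^sup>v = T\<close>.
\<close>

lemma submod_sum:
  assumes "is_submod R E" "finite S" "\<forall>s\<in>S. f s \<in> E"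
  shows "sum f S \<in> E"
  using assms(2,3)
proof (induction S rule: finite_induct)
  case empty then show ?case using assms(1) by (simp add: is_submod_def)
next
  case (insert x F) then show ?case using assms(1) by (simp add: is_submod_def)
qed

lemma subring_submod: "is_subring R \<Longrightarrow> is_submod R R"
  by (simp add: is_subring_def is_submod_def)

lemma Fbar_obtain_nonzero:
  assumes "E \<in> Fbar R" obtains e where "e \<in> E" "e \<noteq> 0"
  using assms by (auto simp: Fbar_def is_submod_def)

lemma fgen_memI: "\<forall>s\<in>S. c s \<in> R \<Longrightarrow> x = (\<Sum>s\<in>S. c s * s) \<Longrightarrow> x \<in> fgen R S"
  unfolding fgen_def by blast

lemma fgen_submod:
  assumes "is_subring R" shows "is_submod R (fgen R S)"
  unfolding is_submod_def
proof (intro conjI ballI)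
  show "0 \<in> fgen R S"
    using assms by (intro fgen_memI[where c="\<lambda>_. 0"]) (auto simp: is_subring_def)
next
  fix x y assume "x \<in> fgen R S" "y \<in> fgen R S"
  then obtain c d where c: "x = (\<Sum>s\<in>S. c s * s)" "\<forall>s\<in>S. c s \<in> R"
    and d: "y = (\<Sum>s\<in>S. d s * s)" "\<forall>s\<in>S. d s \<in> R" unfolding fgen_def by blast
  have "x + y = (\<Sum>s\<in>S. (c s + d s) * s)" using c d by (simp add: distrib_right sum.distrib)
  moreover have "\<forall>s\<in>S. c s + d s \<in> R" using c d assms by (simp add: is_subring_def)
  ultimately show "x + y \<in> fgen R S" by (intro fgen_memI) auto
next
  fix r x assume "r \<in> R" "x \<in> fgen R S"
  then obtain c where c: "x = (\<Sum>s\<in>S. c s * s)" "\<forall>s\<in>S. c s \<in> R" unfolding fgen_def by blast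
  have "r * x = (\<Sum>s\<in>S. (r * c s) * s)" using c by (simp add: sum_distrib_left mult.assoc)
  moreover have "\<forall>s\<in>S. r * c s \<in> R" using c assms \<open>r \<in> R\<close> by (simp add: is_subring_def)
  ultimately show "r * x \<in> fgen R S" by (intro fgen_memI) auto
qed

lemma subset_fgen:
  assumes "is_subring R" "finite S" shows "S \<subseteq> fgen R S"
proof
  fix s assume s: "s \<in> S"
  have "(\<Sum>t\<in>S. (if t = s then 1 else 0) * t) = (\<Sum>t\<in>S. if t = s then t else 0)"
    by (rule sum.cong) auto
  also have "\<dots> = s" using assms(2) s by (simp add: sum.delta)
  finally show "s \<in> fgen R S"
    using assms(1) by (intro fgen_memI[where c="\<lambda>t. if t = s then 1 else 0"]) (auto simp: is_subring_def)
qed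

lemma fgen_least:
  assumes "is_submod R E" "finite S" "S \<subseteq> E" shows "fgen R S \<subseteq> E"
proof
  fix x assume "x \<in> fgen R S"
  then obtain c where c: "x = (\<Sum>s\<in>S. c s * s)" "\<forall>s\<in>S. c s \<in> R" unfolding fgen_def by blast
  have "\<forall>s\<in>S. c s * s \<in> E" using c assms(1,3) by (auto simp: is_submod_def)
  then show "x \<in> E" using c(1) submod_sum[OF assms(1,2)] by simp
qed

lemma image_mult_fgen:
  assumes "b \<noteq> (0::'a::field)" "finite S"
  shows "(\<lambda>y. b * y) ` fgen R S = fgen R ((\<lambda>y. b * y) ` S)"
proof
  have inj: "inj_on (\<lambda>y. b * y) S" using assms(1) by (auto simp: inj_on_def)
  show "(\<lambda>y. b * y) ` fgen R S \<subseteq> fgen R ((\<lambda>y. b * y) ` S)"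
  proof
    fix z assume "z \<in> (\<lambda>y. b * y) ` fgen R S"
    then obtain c where c: "z = b * (\<Sum>s\<in>S. c s * s)" "\<forall>s\<in>S. c s \<in> R" unfolding fgen_def by blast
    have "(\<Sum>u\<in>(\<lambda>y. b * y) ` S. c (u / b) * u) = (\<Sum>s\<in>S. c (b * s / b) * (b * s))"
      by (subst sum.reindex[OF inj]) (simp add: o_def)
    also have "\<dots> = z" using assms(1) c(1) by (simp add: sum_distrib_left mult.left_commute)
    finally show "z \<in> fgen R ((\<lambda>y. b * y) ` S)"
      using c(2) assms(1) by (intro fgen_memI[where c="\<lambda>u. c (u / b)"]) auto
  qed
  show "fgen R ((\<lambda>y. b * y) ` S) \<subseteq> (\<lambda>y. b * y) ` fgen R S"
  proof
    fix z assume "z \<in> fgen R ((\<lambda>y. b * y) ` S)"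
    then obtain c where c: "z = (\<Sum>u\<in>(\<lambda>y. b * y) ` S. c u * u)" "\<forall>u\<in>(\<lambda>y. b * y) ` S. c u \<in> R"
      unfolding fgen_def by blast
    have "z = (\<Sum>s\<in>S. c (b * s) * (b * s))" using c(1) by (simp add: sum.reindex[OF inj])
    also have "\<dots> = b * (\<Sum>s\<in>S. c (b * s) * s)" by (simp add: sum_distrib_left mult.left_commute)
    finally have "z = b * (\<Sum>s\<in>S. c (b * s) * s)" .
    moreover have "(\<Sum>s\<in>S. c (b * s) * s) \<in> fgen R S"
      using c(2) by (intro fgen_memI[where c="\<lambda>s. c (b * s)"]) auto
    ultimately show "z \<in> (\<lambda>y. b * y) ` fgen R S" by blast
  qed
qed

lemma fsub_fgen: "is_subring R \<Longrightarrow> finite S \<Longrightarrow> fgen R S \<noteq> {0} \<Longrightarrow> fgen R S \<in> fsub R"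
  by (auto simp: fsub_def Fbar_def fgen_submod)

lemma fsubE:
  assumes "F \<in> fsub R" obtains S where "finite S" "F = fgen R S"
  using assms by (auto simp: fsub_def)

lemma fsub_Fbar: "F \<in> fsub R \<Longrightarrow> F \<in> Fbar R"
  by (auto simp: fsub_def)

lemma fsub_singleton:
  assumes "is_subring R" "m \<noteq> 0"
  shows "fgen R {m} \<in> fsub R" "m \<in> fgen R {m}"
proof -
  show m: "m \<in> fgen R {m}" using subset_fgen[OF assms(1)] by auto
  then show "fgen R {m} \<in> fsub R" using fsub_fgen[OF assms(1)] assms(2) by auto
qed

lemma fsub_image_mult:
  assumes "is_subring R" "b \<noteq> 0" "G \<in> fsub R"
  shows "(\<lambda>y. b * y) ` G \<in> fsub R"
proof -
  obtain S where S: "finite S" "G = fgen R S" using assms(3) by (rule fsubE)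
  obtain g where "g \<in> G" "g \<noteq> 0" using fsub_Fbar[OF assms(3)] by (rule Fbar_obtain_nonzero)
  then have "b * g \<in> (\<lambda>y. b * y) ` G" "b * g \<noteq> 0" using assms(2) by auto
  then have "(\<lambda>y. b * y) ` G \<noteq> {0}" by blast
  then show ?thesis
    using S image_mult_fgen[OF assms(2) S(1)] fsub_fgen[OF assms(1) finite_imageI[OF S(1)]] by simp
qed

lemma fsub_union_upper:
  assumes R: "is_subring R" and M: "is_submod R M"
    and K: "K \<in> fsub R" "K \<subseteq> M" and H: "H \<in> fsub R" "H \<subseteq> M"
  obtains L where "L \<in> fsub R" "K \<subseteq> L" "H \<subseteq> L" "L \<subseteq> M"
proof -
  obtain A where A: "finite A" "K = fgen R A" using K(1) by (rule fsubE)
  obtain B where B: "finite B" "H = fgen R B" using H(1) by (rule fsubE)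
  define L where "L = fgen R (A \<union> B)"
  have "A \<union> B \<subseteq> L" unfolding L_def using subset_fgen[OF R, of "A \<union> B"] A B by simp
  then have KL: "K \<subseteq> L" "H \<subseteq> L" using fgen_least[OF fgen_submod[OF R]] A B L_def by auto
  have "A \<union> B \<subseteq> M" using subset_fgen[OF R] A B K H by blast
  then have "L \<subseteq> M" unfolding L_def using fgen_least[OF M] A B by simp
  moreover obtain k where "k \<in> K" "k \<noteq> 0" using fsub_Fbar[OF K(1)] by (rule Fbar_obtain_nonzero)
  then have "L \<noteq> {0}" using KL by blast
  then have "L \<in> fsub R" using fsub_fgen[OF R, of "A \<union> B"] A B L_def by simp
  ultimately show ?thesis using that KL by blast
qed

lemma Fbar_contains_fsub:
  assumes "is_subring R" "M \<in> Fbar R"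
  obtains K where "K \<in> fsub R" "K \<subseteq> M"
proof -
  obtain m where m: "m \<in> M" "m \<noteq> 0" using assms(2) by (rule Fbar_obtain_nonzero)
  have "fgen R {m} \<subseteq> M" using m assms(2) by (intro fgen_least) (auto simp: Fbar_def)
  then show ?thesis using that fsub_singleton[OF assms(1) m(2)] by blast
qed

lemma semistar_Fbar: "semistar D st \<Longrightarrow> E \<in> Fbar D \<Longrightarrow> st E \<in> Fbar D"
  by (simp add: semistar_def)

lemma semistar_submod: "semistar D st \<Longrightarrow> E \<in> Fbar D \<Longrightarrow> is_submod D (st E)"
  by (simp add: semistar_def Fbar_def)

lemma semistar_extensive: "semistar D st \<Longrightarrow> E \<in> Fbar D \<Longrightarrow> E \<subseteq> st E"
  by (simp add: semistar_def)

lemma semistar_idem: "semistar D st \<Longrightarrow> E \<in> Fbar D \<Longrightarrow> st (st E) = st E"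
  by (simp add: semistar_def)

lemma semistar_mono:
  "semistar D st \<Longrightarrow> E \<in> Fbar D \<Longrightarrow> F \<in> Fbar D \<Longrightarrow> E \<subseteq> F \<Longrightarrow> st E \<subseteq> st F"
  by (simp add: semistar_def)

lemma semistar_image_mult:
  "semistar D st \<Longrightarrow> E \<in> Fbar D \<Longrightarrow> x \<noteq> 0 \<Longrightarrow> st ((\<lambda>y. x * y) ` E) = (\<lambda>y. x * y) ` st E"
  by (simp add: semistar_def)

lemma D_Fbar: "is_subring D \<Longrightarrow> D \<in> Fbar D"
  by (auto simp: Fbar_def is_submod_def is_subring_def)

lemma semistar_eq_if_one_mem:
  assumes R: "is_subring D" and ss: "semistar D st"
    and F: "F \<in> Fbar D" "F \<subseteq> D" "1 \<in> st F"
  shows "st F = st D"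
proof
  show "st F \<subseteq> st D" using semistar_mono[OF ss F(1) D_Fbar[OF R] F(2)] .
  have "D \<subseteq> st F"
    using F(3) semistar_submod[OF ss F(1)] unfolding is_submod_def by (metis mult_1_right subsetI)
  then have "st D \<subseteq> st (st F)" using semistar_mono[OF ss D_Fbar[OF R] semistar_Fbar[OF ss F(1)]] by simp
  then show "st D \<subseteq> st F" using semistar_idem[OF ss F(1)] by simp
qed

lemma st_f_mem: "x \<in> st_f D st E \<longleftrightarrow> (\<exists>F. F \<in> fsub D \<and> F \<subseteq> E \<and> x \<in> st F)"
  by (auto simp: st_f_def)

lemma st_f_finite_subset:
  assumes R: "is_subring D" and ss: "semistar D st" and M: "M \<in> Fbar D"
    and fin: "finite S" and S: "S \<subseteq> st_f D st M"
  obtains K where "K \<in> fsub D" "K \<subseteq> M" "S \<subseteq> st K"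
proof -
  have "\<exists>K. K \<in> fsub D \<and> K \<subseteq> M \<and> S \<subseteq> st K"
    using fin S
  proof (induction S rule: finite_induct)
    case empty then show ?case using Fbar_contains_fsub[OF R M] by blast
  next
    case (insert s S)
    then obtain K where K: "K \<in> fsub D" "K \<subseteq> M" "S \<subseteq> st K" by auto
    from insert obtain H where H: "H \<in> fsub D" "H \<subseteq> M" "s \<in> st H" by (auto simp: st_f_mem)
    obtain L where L: "L \<in> fsub D" "K \<subseteq> L" "H \<subseteq> L" "L \<subseteq> M"
      using fsub_union_upper[OF R _ K(1,2) H(1,2)] M by (auto simp: Fbar_def)
    have "st K \<subseteq> st L" "st H \<subseteq> st L" using semistar_mono[OF ss] fsub_Fbar K(1) H(1) L by auto
    then show ?case using L K H by blast
  qed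
  then show ?thesis using that by blast
qed

lemma st_f_submod:
  assumes R: "is_subring D" and ss: "semistar D st" and M: "M \<in> Fbar D"
  shows "is_submod D (st_f D st M)"
  unfolding is_submod_def
proof (intro conjI ballI)
  obtain K where K: "K \<in> fsub D" "K \<subseteq> M" using R M by (rule Fbar_contains_fsub)
  then show "0 \<in> st_f D st M"
    using semistar_submod[OF ss fsub_Fbar[OF K(1)]] by (auto simp: st_f_mem is_submod_def)
next
  fix x y assume "x \<in> st_f D st M" "y \<in> st_f D st M"
  then obtain K where K: "K \<in> fsub D" "K \<subseteq> M" "{x, y} \<subseteq> st K"
    using st_f_finite_subset[OF R ss M, of "{x, y}"] by auto
  then have "x + y \<in> st K" using semistar_submod[OF ss fsub_Fbar[OF K(1)]] by (auto simp: is_submod_def)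
  then show "x + y \<in> st_f D st M" using K by (auto simp: st_f_mem)
next
  fix r x assume "r \<in> D" "x \<in> st_f D st M"
  then obtain K where K: "K \<in> fsub D" "K \<subseteq> M" "x \<in> st K" by (auto simp: st_f_mem)
  then have "r * x \<in> st K"
    using \<open>r \<in> D\<close> semistar_submod[OF ss fsub_Fbar[OF K(1)]] by (auto simp: is_submod_def)
  then show "r * x \<in> st_f D st M" using K by (auto simp: st_f_mem)
qed

lemma st_f_subset_st_f:
  assumes R: "is_subring D" and ss: "semistar D st" and M: "M \<in> Fbar D"
    and E: "E \<subseteq> st_f D st M"
  shows "st_f D st E \<subseteq> st_f D st M"
proof
  fix z assume "z \<in> st_f D st E"
  then obtain G where G: "G \<in> fsub D" "G \<subseteq> E" "z \<in> st G" by (auto simp: st_f_mem)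
  obtain S where S: "finite S" "G = fgen D S" using G(1) by (rule fsubE)
  have "S \<subseteq> st_f D st M" using subset_fgen[OF R S(1)] S G E by blast
  then obtain K where K: "K \<in> fsub D" "K \<subseteq> M" "S \<subseteq> st K"
    using st_f_finite_subset[OF R ss M S(1)] by blast
  note KF = fsub_Fbar[OF K(1)]
  have "G \<subseteq> st K" using S fgen_least[OF semistar_submod[OF ss KF]] K by simp
  then have "st G \<subseteq> st K"
    using semistar_mono[OF ss fsub_Fbar[OF G(1)] semistar_Fbar[OF ss KF]] semistar_idem[OF ss KF] by simp
  then show "z \<in> st_f D st M" using G K by (auto simp: st_f_mem)
qed

lemma subset_st_f:
  assumes R: "is_subring D" and ss: "semistar D st" and M: "M \<in> Fbar D"
  shows "M \<subseteq> st_f D st M"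
proof
  fix m assume m: "m \<in> M"
  show "m \<in> st_f D st M"
  proof (cases "m = 0")
    case True then show ?thesis using st_f_submod[OF R ss M] by (simp add: is_submod_def)
  next
    case False
    note m1 = fsub_singleton[OF R False]
    have "fgen D {m} \<subseteq> M" using m M by (intro fgen_least) (auto simp: Fbar_def)
    moreover have "m \<in> st (fgen D {m})" using semistar_extensive[OF ss fsub_Fbar[OF m1(1)]] m1(2) by auto
    ultimately show ?thesis using m1 by (auto simp: st_f_mem)
  qed
qed

lemma ideal_Fbar: "is_ideal D M \<Longrightarrow> M \<noteq> {0} \<Longrightarrow> M \<in> Fbar D"
  by (simp add: is_ideal_def Fbar_def)

lemma finite_subset_Union_chain:
  assumes "finite S" "S \<subseteq> \<Union>C" "C \<noteq> {}" "subset.chain Z C"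
  shows "\<exists>Q\<in>C. S \<subseteq> Q"
  using assms(1,2)
proof (induction S rule: finite_induct)
  case empty then show ?case using assms(3) by auto
next
  case (insert x F)
  then obtain Q where Q: "Q \<in> C" "F \<subseteq> Q" by auto
  obtain Q' where Q': "Q' \<in> C" "x \<in> Q'" using insert by auto
  have "Q \<subseteq> Q' \<or> Q' \<subseteq> Q" using assms(4) Q Q' unfolding subset.chain_def by blast
  then show ?case using Q Q' by blast
qed

lemma ideal_Union_chain:
  assumes C: "C \<noteq> {}" "subset.chain Z C" and ideals: "\<forall>Q\<in>C. is_ideal D Q"
  shows "is_ideal D (\<Union>C)"
  unfolding is_ideal_def is_submod_def
proof (intro conjI ballI subsetI)
  show "0 \<in> \<Union>C" using C ideals by (auto simp: is_ideal_def is_submod_def)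
next
  fix x y assume "x \<in> \<Union>C" "y \<in> \<Union>C"
  then obtain Q where Q: "Q \<in> C" "{x, y} \<subseteq> Q" using finite_subset_Union_chain[of "{x, y}" C Z] C by auto
  then have "x + y \<in> Q" using ideals by (auto simp: is_ideal_def is_submod_def)
  then show "x + y \<in> \<Union>C" using Q(1) by blast
next
  fix r x assume "r \<in> D" "x \<in> \<Union>C"
  then show "r * x \<in> \<Union>C" using ideals by (auto simp: is_ideal_def is_submod_def)
next
  fix x assume "x \<in> \<Union>C"
  then show "x \<in> D" using ideals by (auto simp: is_ideal_def)
qed

lemma st_f_Union_chain:
  assumes R: "is_subring D" and C: "C \<noteq> {}" "subset.chain Z C" and submods: "\<forall>Q\<in>C. is_submod D Q"
    and x: "x \<in> st_f D st (\<Union>C)"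
  shows "\<exists>Q\<in>C. x \<in> st_f D st Q"
proof -
  obtain G where G: "G \<in> fsub D" "G \<subseteq> \<Union>C" "x \<in> st G" using x by (auto simp: st_f_mem)
  obtain S where S: "finite S" "G = fgen D S" using G(1) by (rule fsubE)
  have "S \<subseteq> \<Union>C" using subset_fgen[OF R S(1)] S G by blast
  then obtain Q where Q: "Q \<in> C" "S \<subseteq> Q" using finite_subset_Union_chain[OF S(1) _ C] by blast
  then have "G \<subseteq> Q" using S fgen_least submods by blast
  then show ?thesis using G Q by (auto simp: st_f_mem)
qed

definition ideal_insert :: "'a::field set \<Rightarrow> 'a set \<Rightarrow> 'a \<Rightarrow> 'a set" where
  "ideal_insert D M a = {m + r * a | m r. m \<in> M \<and> r \<in> D}"

lemma ideal_insert:
  assumes R: "is_subring D" and M: "is_ideal D M" and a: "a \<in> D"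
  shows "is_ideal D (ideal_insert D M a)" "M \<subseteq> ideal_insert D M a" "a \<in> ideal_insert D M a"
proof -
  have M0: "0 \<in> M" using M by (simp add: is_ideal_def is_submod_def)
  have R01: "0 \<in> D" "1 \<in> D" using R by (auto simp: is_subring_def)
  show "M \<subseteq> ideal_insert D M a"
    unfolding ideal_insert_def using R01 by force
  show "a \<in> ideal_insert D M a"
    unfolding ideal_insert_def using R01 M0 by force
  show "is_ideal D (ideal_insert D M a)" unfolding is_ideal_def is_submod_def
  proof (intro conjI ballI subsetI)
    show "0 \<in> ideal_insert D M a" unfolding ideal_insert_def using R01 M0 by force
  next
    fix x y assume "x \<in> ideal_insert D M a" "y \<in> ideal_insert D M a"
    then obtain m r m' r' where "x = m + r * a" "m \<in> M" "r \<in> D" "y = m' + r' * a" "m' \<in> M" "r' \<in> D"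
      unfolding ideal_insert_def by blast
    moreover have "x + y = (m + m') + (r + r') * a" using calculation by (simp add: algebra_simps)
    moreover have "m + m' \<in> M" using calculation M by (simp add: is_ideal_def is_submod_def)
    moreover have "r + r' \<in> D" using calculation R by (simp add: is_subring_def)
    ultimately show "x + y \<in> ideal_insert D M a" unfolding ideal_insert_def by blast
  next
    fix s x assume "s \<in> D" "x \<in> ideal_insert D M a"
    then obtain m r where "x = m + r * a" "m \<in> M" "r \<in> D" unfolding ideal_insert_def by blast
    moreover have "s * x = s * m + (s * r) * a" using calculation by (simp add: algebra_simps)
    moreover have "s * m \<in> M" using calculation M \<open>s \<in> D\<close> by (simp add: is_ideal_def is_submod_def)
    moreover have "s * r \<in> D" using calculation R \<open>s \<in> D\<close> by (simp add: is_subring_def)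
    ultimately show "s * x \<in> ideal_insert D M a" unfolding ideal_insert_def by blast
  next
    fix x assume "x \<in> ideal_insert D M a"
    then obtain m r where "x = m + r * a" "m \<in> M" "r \<in> D" unfolding ideal_insert_def by blast
    moreover have "m \<in> D" using calculation M by (auto simp: is_ideal_def)
    ultimately show "x \<in> D" using R a by (simp add: is_subring_def)
  qed
qed

lemma mem_st_f_if_one_mem_st_f_insert:
  assumes R: "is_subring D" and ss: "semistar D st" and M: "is_ideal D M"
    and b: "b \<in> D" "b \<noteq> 0" "b * a \<in> M" and one: "1 \<in> st_f D st (ideal_insert D M a)"
  shows "b \<in> st_f D st M"
proof -
  obtain G where G: "G \<in> fsub D" "G \<subseteq> ideal_insert D M a" "1 \<in> st G" using one by (auto simp: st_f_mem)
  have "(\<lambda>y. b * y) ` G \<subseteq> M"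
  proof
    fix z assume "z \<in> (\<lambda>y. b * y) ` G"
    then obtain m r where "z = b * (m + r * a)" "m \<in> M" "r \<in> D"
      using G(2) unfolding ideal_insert_def by blast
    then have z: "z = b * m + r * (b * a)" "m \<in> M" "r \<in> D" by (simp_all add: algebra_simps)
    then have "b * m \<in> M" "r * (b * a) \<in> M" using M b by (auto simp: is_ideal_def is_submod_def)
    then show "z \<in> M" using M z(1) by (simp add: is_ideal_def is_submod_def)
  qed
  moreover have "b \<in> st ((\<lambda>y. b * y) ` G)"
    using semistar_image_mult[OF ss fsub_Fbar[OF G(1)] b(2)] G(3) by force
  ultimately show ?thesis using fsub_image_mult[OF R b(2) G(1)] by (auto simp: st_f_mem)
qed

context
  fixes D :: "'a::field set" and st :: "'a set \<Rightarrow> 'a set" and M :: "'a set"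
  assumes R: "is_subring D" and ss: "semistar D st"
    and M: "is_ideal D M" "M \<noteq> {0}" and M1: "1 \<notin> st_f D st M"
    and maximal: "\<And>Q. is_ideal D Q \<Longrightarrow> M \<subseteq> Q \<Longrightarrow> 1 \<notin> st_f D st Q \<Longrightarrow> Q = M"
begin

lemma maximal_st_f_inter:
  shows "st_f D st M \<inter> D = M"
proof -
  have MF: "M \<in> Fbar D" using ideal_Fbar[OF M] .
  have "d \<in> M" if d: "d \<in> D" "d \<in> st_f D st M" for d
  proof -
    note ins = ideal_insert[OF R M(1) d(1)]
    have "ideal_insert D M d \<subseteq> st_f D st M"
    proof
      fix x assume "x \<in> ideal_insert D M d"
      then obtain m r where x: "x = m + r * d" "m \<in> M" "r \<in> D" unfolding ideal_insert_def by blast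
      then show "x \<in> st_f D st M"
        using subset_st_f[OF R ss MF] st_f_submod[OF R ss MF] d by (auto simp: is_submod_def)
    qed
    then have "1 \<notin> st_f D st (ideal_insert D M d)" using st_f_subset_st_f[OF R ss MF] M1 by blast
    then show "d \<in> M" using maximal ins by blast
  qed
  then show ?thesis using subset_st_f[OF R ss MF] M by (auto simp: is_ideal_def)
qed

lemma maximal_quasi_prime: "quasi_prime D (st_f D st) M"
  unfolding quasi_prime_def
proof (intro conjI ballI impI)
  show "is_ideal D M" "M \<noteq> {0}" "st_f D st M \<inter> D = M" by (fact M maximal_st_f_inter)+
  show "M \<noteq> D" using maximal_st_f_inter M1 R by (auto simp: is_subring_def)
next
  fix a b assume ab: "a \<in> D" "b \<in> D" "a * b \<in> M"
  show "a \<in> M \<or> b \<in> M"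
  proof (rule ccontr)
    assume nab: "\<not> (a \<in> M \<or> b \<in> M)"
    note ins = ideal_insert[OF R M(1) ab(1)]
    have "1 \<in> st_f D st (ideal_insert D M a)" using maximal[OF ins(1,2)] ins(3) nab by blast
    moreover have "b \<noteq> 0" using nab M by (auto simp: is_ideal_def is_submod_def)
    ultimately have "b \<in> st_f D st M"
      using mem_st_f_if_one_mem_st_f_insert[OF R ss M(1) ab(2)] ab(3) by (simp add: mult.commute)
    then show False using maximal_st_f_inter ab(2) nab by blast
  qed
qed

end

lemma exists_quasi_prime:
  assumes R: "is_subring D" and ss: "semistar D st" and I: "is_ideal D I" "I \<noteq> {0}"
    and one: "1 \<notin> st_f D st I"
  obtains P where "quasi_prime D (st_f D st) P" "I \<subseteq> P"
proof -
  define Z where "Z = {Q. is_ideal D Q \<and> I \<subseteq> Q \<and> 1 \<notin> st_f D st Q}"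
  have "\<Union>C \<in> Z" if C: "C \<noteq> {}" "subset.chain Z C" for C
  proof -
    have CZ: "C \<subseteq> Z" using C(2) by (simp add: subset.chain_def)
    then have "1 \<notin> st_f D st (\<Union>C)"
      using st_f_Union_chain[OF R C] by (fastforce simp: Z_def is_ideal_def)
    then show ?thesis using ideal_Union_chain[OF C] C CZ by (auto simp: Z_def)
  qed
  moreover have "Z \<noteq> {}" using I one unfolding Z_def by blast
  ultimately obtain M where MZ: "M \<in> Z" and Mmax: "\<forall>X\<in>Z. M \<subseteq> X \<longrightarrow> X = M"
    using subset_Zorn_nonempty[of Z] by blast
  then have IM: "I \<subseteq> M" by (simp add: Z_def)
  have "is_ideal D M" using MZ by (simp add: Z_def)
  moreover have "M \<noteq> {0}" using IM I by (auto simp: is_ideal_def is_submod_def)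
  moreover have "1 \<notin> st_f D st M" using MZ by (simp add: Z_def)
  moreover have "Q = M" if "is_ideal D Q" "M \<subseteq> Q" "1 \<notin> st_f D st Q" for Q
    using that Mmax IM by (auto simp: Z_def)
  ultimately have "quasi_prime D (st_f D st) M" by (rule maximal_quasi_prime[OF R ss])
  then show ?thesis using that IM by blast
qed

lemma quasi_prime_one_notin: "is_subring D \<Longrightarrow> quasi_prime D st' P \<Longrightarrow> 1 \<notin> P"
  by (force simp: quasi_prime_def is_ideal_def is_submod_def)

lemma quasi_prime_compl_mult_closed:
  assumes R: "is_subring D" and P: "quasi_prime D st' P"
  shows "1 \<in> D - P" "0 \<notin> D - P" "\<forall>s\<in>D - P. \<forall>s'\<in>D - P. s * s' \<in> D - P"
  using assms quasi_prime_one_notin[OF R P]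
  by (auto simp: quasi_prime_def is_ideal_def is_submod_def is_subring_def)

lemma frac_sum_clear_denominators:
  fixes n :: nat
  assumes T: "is_subring T" and S: "S \<subseteq> T" "1 \<in> S" "0 \<notin> S" "\<forall>s\<in>S. \<forall>s'\<in>S. s * s' \<in> S"
  shows "\<forall>i<n. a i \<in> T \<and> b i \<in> frac T S \<Longrightarrow> \<exists>s\<in>S. s * (\<Sum>i<n. a i * b i) \<in> T"
proof (induction n)
  case 0
  then show ?case using S T by (auto simp: is_subring_def)
next
  case (Suc n)
  then obtain s where s: "s \<in> S" "s * (\<Sum>i<n. a i * b i) \<in> T" by auto
  obtain t u where tu: "b n = t / u" "t \<in> T" "u \<in> S" using Suc.prems unfolding frac_def by blast
  have "u \<noteq> 0" using tu S by auto
  then have eq: "(s * u) * (\<Sum>i<Suc n. a i * b i) = u * (s * (\<Sum>i<n. a i * b i)) + s * (a n * t)"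
    using tu(1) by (simp add: field_simps)
  have "u \<in> T" "s \<in> T" "a n \<in> T" using tu s S Suc.prems by auto
  then have "u * (s * (\<Sum>i<n. a i * b i)) + s * (a n * t) \<in> T"
    using s(2) tu(2) T by (simp add: is_subring_def)
  then show ?case using S s tu eq by metis
qed

definition conductor :: "'a::field set \<Rightarrow> 'a set \<Rightarrow> 'a \<Rightarrow> 'a set" where
  "conductor D T x = {d \<in> D. d * x \<in> T}"

lemma conductor_ideal:
  assumes R: "is_subring D" and T: "is_subring T" and DT: "D \<subseteq> T"
  shows "is_ideal D (conductor D T x)"
  unfolding is_ideal_def is_submod_def conductor_def
proof (intro conjI ballI subsetI)
  fix r a assume "r \<in> D" "a \<in> {d \<in> D. d * x \<in> T}"
  then show "r * a \<in> {d \<in> D. d * x \<in> T}"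
    using R T DT by (auto simp: is_subring_def mult.assoc)
qed (use R T in \<open>auto simp: is_subring_def distrib_right\<close>)

lemma conductor_nonzero:
  assumes "has_quotient_field D" "D \<subseteq> T"
  shows "conductor D T x \<noteq> {0}"
proof -
  obtain a b where ab: "a \<in> D" "b \<in> D" "b \<noteq> 0" "x = a / b"
    using assms(1) unfolding has_quotient_field_def by blast
  then have "b \<in> conductor D T x" using assms(2) by (auto simp: conductor_def)
  then show ?thesis using ab(3) by auto
qed

lemma modprod_memI:
  fixes n :: nat
  shows "\<forall>i<n. a i \<in> A \<and> b i \<in> B \<Longrightarrow> x = (\<Sum>i<n. a i * b i) \<Longrightarrow> x \<in> modprod A B"
  unfolding modprod_def by blast

lemma modprod_memE:
  assumes "x \<in> modprod A B"
  obtains n :: nat and a b where "\<forall>i<n. a i \<in> A \<and> b i \<in> B" "x = (\<Sum>i<n. a i * b i)"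
  using assms unfolding modprod_def by blast

lemma subset_modprod_left: "1 \<in> B \<Longrightarrow> A \<subseteq> modprod A B"
  by (auto intro!: modprod_memI[of 1 "\<lambda>_. _" A "\<lambda>_. 1"])

lemma subset_modprod_right: "1 \<in> A \<Longrightarrow> B \<subseteq> modprod A B"
  by (auto intro!: modprod_memI[of 1 "\<lambda>_. 1" A "\<lambda>_. _"])

lemma fgen_subset_modprod:
  assumes "finite S" "S \<subseteq> F" shows "fgen T S \<subseteq> modprod F T"
proof
  fix x assume "x \<in> fgen T S"
  then obtain c where c: "x = (\<Sum>s\<in>S. c s * s)" "\<forall>s\<in>S. c s \<in> T" unfolding fgen_def by blast
  obtain h where h: "bij_betw h {0..<card S} S" using ex_bij_betw_nat_finite[OF assms(1)] by blast
  have "x = (\<Sum>i\<in>{0..<card S}. c (h i) * h i)" using c(1) sum.reindex_bij_betw[OF h, of "\<lambda>s. c s * s"] by simp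
  also have "\<dots> = (\<Sum>i<card S. h i * c (h i))" by (simp add: atLeast0LessThan mult.commute)
  finally show "x \<in> modprod F T"
    using h c(2) assms(2) by (intro modprod_memI) (auto simp: bij_betw_def)
qed

lemma modprod_mult_mem:
  assumes T: "is_subring T" and F: "\<forall>f\<in>F. x * f \<in> T" and g: "g \<in> modprod F T"
  shows "x * g \<in> T"
proof -
  obtain n :: nat and a b where ab: "\<forall>i<n. a i \<in> F \<and> b i \<in> T" "g = (\<Sum>i<n. a i * b i)"
    using g by (rule modprod_memE)
  have "x * g = (\<Sum>i<n. (x * a i) * b i)" using ab(2) by (simp add: sum_distrib_left mult.assoc)
  moreover have "\<forall>i\<in>{..<n}. (x * a i) * b i \<in> T" using ab(1) F T by (simp add: is_subring_def)
  ultimately show ?thesis using submod_sum[OF subring_submod[OF T] finite_lessThan] by simp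
qed

lemma modprod_subset: "is_subring T \<Longrightarrow> F \<subseteq> T \<Longrightarrow> modprod F T \<subseteq> T"
  using modprod_mult_mem[of T F 1] by auto

lemma subset_ell: "is_subring D \<Longrightarrow> 1 \<in> T \<Longrightarrow> E \<subseteq> ell D st T E"
  unfolding ell_def frac_def
  by (auto dest!: quasi_prime_compl_mult_closed(1) intro!: subset_modprod_left[THEN subsetD] exI[of _ 1])

lemma t_op_subset:
  assumes T: "is_subring T" and E: "E \<subseteq> T" shows "t_op T E \<subseteq> T"
proof
  fix z assume "z \<in> t_op T E"
  then obtain G where G: "G \<subseteq> E" "z \<in> v_op T G" unfolding t_op_def st_f_def by blast
  have "1 \<in> colon T G" using G E by (auto simp: colon_def)
  then have "z * 1 \<in> T" using G(2) unfolding v_op_def colon_def by blast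
  then show "z \<in> T" by simp
qed

lemma subset_v_op:
  assumes T: "is_subring T" and "colon T G \<subseteq> T" shows "T \<subseteq> v_op T G"
  using assms unfolding v_op_def colon_def is_subring_def by blast

lemma subring_fsub:
  assumes T: "is_subring T" shows "T \<in> fsub T"
proof -
  have "fgen T {1} = T"
  proof
    show "fgen T {1} \<subseteq> T" using fgen_least[OF subring_submod[OF T]] T by (simp add: is_subring_def)
    show "T \<subseteq> fgen T {1}" by (auto intro: fgen_memI[where c="\<lambda>_. _"])
  qed
  then show ?thesis using fsub_singleton(1)[OF T, of 1] by simp
qed

lemma t_op_self:
  assumes T: "is_subring T" shows "t_op T T = T"
proof
  show "t_op T T \<subseteq> T" using t_op_subset[OF T] by simp
  have "colon T T \<subseteq> T" using T by (force simp: colon_def is_subring_def)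
  then show "T \<subseteq> t_op T T"
    using subset_v_op[OF T] subring_fsub[OF T] unfolding t_op_def st_f_def by blast
qed

lemma mem_if_one_mem_t_op:
  assumes "1 \<in> t_op T E" "\<forall>e\<in>E. x * e \<in> T" shows "x \<in> T"
proof -
  obtain G where G: "G \<subseteq> E" "1 \<in> v_op T G" using assms(1) unfolding t_op_def st_f_def by blast
  have "x \<in> colon T G" using G(1) assms(2) by (auto simp: colon_def)
  then have "1 * x \<in> T" using G(2) unfolding v_op_def colon_def by blast
  then show "x \<in> T" by simp
qed

lemma one_mem_st_f_conductor:
  assumes R: "is_subring D" and ss: "semistar D st" and T: "is_subring T" and DT: "D \<subseteq> T"
    and I: "conductor D T x \<noteq> {0}" and x: "x \<in> ell D st T T"
  shows "1 \<in> st_f D st (conductor D T x)"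
proof (rule ccontr)
  assume "1 \<notin> st_f D st (conductor D T x)"
  then obtain P where P: "quasi_prime D (st_f D st) P" "conductor D T x \<subseteq> P"
    using exists_quasi_prime[OF R ss conductor_ideal[OF R T DT] I] by blast
  have "x \<in> modprod T (frac T (D - P))" using x P unfolding ell_def by blast
  then obtain n :: nat and a b where ab: "\<forall>i<n. a i \<in> T \<and> b i \<in> frac T (D - P)" "x = (\<Sum>i<n. a i * b i)"
    by (rule modprod_memE)
  obtain s where "s \<in> D - P" "s * x \<in> T"
    using frac_sum_clear_denominators[OF T _ quasi_prime_compl_mult_closed[OF R P(1)] ab(1)] ab(2) DT by blast
  then show False using P(2) by (auto simp: conductor_def)
qed

lemma ell_subset_if_t_linked:
  assumes Q: "has_quotient_field D" and ss: "semistar D st" and T: "is_subring T" and DT: "D \<subseteq> T"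
    and tl: "t_linked D st T"
  shows "ell D st T T \<subseteq> T"
proof
  fix x assume x: "x \<in> ell D st T T"
  have R: "is_subring D" using Q by (simp add: has_quotient_field_def)
  obtain F where F: "F \<in> fsub D" "F \<subseteq> conductor D T x" "1 \<in> st F"
    using one_mem_st_f_conductor[OF R ss T DT conductor_nonzero[OF Q DT] x] by (auto simp: st_f_mem)
  have FD: "F \<subseteq> D" using F(2) by (auto simp: conductor_def)
  then have "st F = st D" using semistar_eq_if_one_mem[OF R ss fsub_Fbar[OF F(1)]] F(3) by blast
  then have "t_op T (modprod F T) = T" using tl F(1) FD t_op_self[OF T] unfolding t_linked_def by blast
  moreover have "\<forall>f\<in>F. x * f \<in> T" using F(2) by (auto simp: conductor_def mult.commute)
  then have "\<forall>g\<in>modprod F T. x * g \<in> T" using modprod_mult_mem[OF T] by blast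
  ultimately show "x \<in> T" using mem_if_one_mem_t_op T by (metis is_subring_def)
qed

lemma not_subset_quasi_prime:
  assumes R: "is_subring D" and ss: "semistar D st"
    and F: "F \<in> fsub D" "st F = st D" and P: "quasi_prime D (st_f D st) P"
  shows "\<not> F \<subseteq> P"
proof
  assume "F \<subseteq> P"
  then have "st F \<subseteq> st_f D st P" using F(1) by (auto simp: st_f_mem)
  then have "st D \<subseteq> st_f D st P" using F(2) by simp
  moreover have "1 \<in> st D" using semistar_extensive[OF ss D_Fbar[OF R]] R by (auto simp: is_subring_def)
  ultimately have "1 \<in> P" using P R by (auto simp: quasi_prime_def is_subring_def)
  then show False using quasi_prime_one_notin[OF R P] by simp
qed

lemma colon_subset_ell:
  assumes R: "is_subring D" and ss: "semistar D st" and T: "is_subring T"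
    and F: "F \<in> fsub D" "F \<subseteq> D" "st F = st D" "F = fgen D S" "finite S"
  shows "colon T (fgen T S) \<subseteq> ell D st T T"
proof
  fix w assume w: "w \<in> colon T (fgen T S)"
  have "w \<in> modprod T (frac T (D - P))" if P: "quasi_prime D (st_f D st) P" for P
  proof -
    have "\<not> S \<subseteq> P"
      using not_subset_quasi_prime[OF R ss F(1,3) P] fgen_least[of D P S] F(4,5) P
      by (auto simp: quasi_prime_def is_ideal_def)
    then obtain s where s: "s \<in> S" "s \<notin> P" by blast
    have "s \<in> D" "s \<noteq> 0" using s subset_fgen[OF R F(5)] F(2,4) P
      by (auto simp: quasi_prime_def is_ideal_def is_submod_def)
    moreover have "w * s \<in> T" using w s subset_fgen[OF T F(5)] unfolding colon_def by blast
    ultimately have "w \<in> frac T (D - P)" unfolding frac_def using s by force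
    then show ?thesis using subset_modprod_right T by (auto simp: is_subring_def)
  qed
  then show "w \<in> ell D st T T" unfolding ell_def by blast
qed

lemma t_linked_if_ell_eq:
  assumes R: "is_subring D" and ss: "semistar D st" and T: "is_subring T" and DT: "D \<subseteq> T"
    and ell: "ell D st T T = T"
  shows "t_linked D st T"
  unfolding t_linked_def
proof (intro allI impI, elim conjE)
  fix F assume F: "F \<in> fsub D" "F \<subseteq> D" "st F = st D"
  obtain S where S: "finite S" "F = fgen D S" using F(1) by (rule fsubE)
  have "fgen T S \<subseteq> modprod F T" using fgen_subset_modprod[OF S(1)] subset_fgen[OF R S(1)] S(2) by simp
  moreover have "fgen T S \<in> fsub T"
  proof -
    obtain f where "f \<in> F" "f \<noteq> 0" using fsub_Fbar[OF F(1)] by (rule Fbar_obtain_nonzero)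
    then have "\<exists>s\<in>S. s \<noteq> 0" using S(2) unfolding fgen_def by (force intro: sum.neutral)
    then show ?thesis using fsub_fgen[OF T S(1)] subset_fgen[OF T S(1)] by blast
  qed
  moreover have "T \<subseteq> v_op T (fgen T S)"
    using subset_v_op[OF T] colon_subset_ell[OF R ss T F S(2,1)] ell by simp
  ultimately have "T \<subseteq> t_op T (modprod F T)" unfolding t_op_def st_f_def by blast
  moreover have "t_op T (modprod F T) \<subseteq> T" using t_op_subset[OF T modprod_subset[OF T]] F(2) DT by blast
  ultimately show "t_op T (modprod F T) = t_op T T" using t_op_self[OF T] by blast
qed

theorem proposition3p16:
  fixes D T :: "'a::field set" and st :: "'a set \<Rightarrow> 'a set"
  assumes "has_quotient_field D"
    and "semistar D st"
    and "is_subring T" and "D \<subseteq> T"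
  shows "t_linked D st T \<longleftrightarrow> ell D st T T = T"
proof -
  have R: "is_subring D" using assms(1) by (simp add: has_quotient_field_def)
  have "T \<subseteq> ell D st T T" using subset_ell[OF R] assms(3) by (simp add: is_subring_def)
  then show ?thesis
    using ell_subset_if_t_linked[OF assms] t_linked_if_ell_eq[OF R assms(2-4)] by blast
qed

end
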